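(* Let $S\subseteq\Sigma$ and let $Q_1,\ldots,Q_n$ ($n\ge1$) be atomic assertions. Then \[ S\not\vDash Q_1\oplus\cdots\oplus Q_n \quad\text{iff}\quad \exists i.\ S\vDash\overline{Q}_i \ \text{ or }\ S\vDash(\overline{Q}_1\land\cdots\land\overline{Q}_n)\oplus\top \ \text{ or }\ S\vDash\top^\oplus . \]
   Context: Nondeterministic outcome assertions: given a satisfaction relation $\vDash_\Sigma$ between program states $\sigma\in\Sigma$ and atomic assertions, a set $S\subseteq\Sigma$ satisfies an atomic assertion $P$ iff $S\neq\emptyset$ and $\sigma\vDash_\Sigma P$ for all $\sigma\in S$. Atomic assertions are closed under negation: $\overline{Q}$ is the atomic assertion with $\sigma\vDash_\Sigma\overline{Q}$ iff $\sigma\not\vDash_\Sigma Q$. Compound assertions: $S\vDash\top$ always; $S\vDash\top^\oplus$ iff $S=\emptyset$; $S\vDash\varphi\land\psi$ iff $S\vDash\varphi$ and $S\vDash\psi$; $S\vDash\varphi\oplus\psi$ iff there are $S_1,S_2$ with $S_1\cup S_2=S$, $S_1\vDash\varphi$, $S_2\vDash\psi$. *)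

theory Defs
  imports Main
begin

datatype 'a assn =
    Atom 'a
  | Top
  | TopPlus
  | Conj "'a assn" "'a assn"
  | Oplus "'a assn" "'a assn"

fun models :: "('s \<Rightarrow> 'a \<Rightarrow> bool) \<Rightarrow> 's set \<Rightarrow> 'a assn \<Rightarrow> bool" where
  "models sat S (Atom P) = (S \<noteq> {} \<and> (\<forall>\<sigma>\<in>S. sat \<sigma> P))"
| "models sat S Top = True"
| "models sat S TopPlus = (S = {})"
| "models sat S (Conj \<phi> \<psi>) = (models sat S \<phi> \<and> models sat S \<psi>)"
| "models sat S (Oplus \<phi> \<psi>) =
     (\<exists>S1 S2. S1 \<union> S2 = S \<and> models sat S1 \<phi> \<and> models sat S2 \<psi>)"

fun oplus_atoms :: "'a list \<Rightarrow> 'a assn" where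
  "oplus_atoms [] = TopPlus"
| "oplus_atoms [Q] = Atom Q"
| "oplus_atoms (Q # Qs) = Oplus (Atom Q) (oplus_atoms Qs)"

fun conj_atoms :: "'a list \<Rightarrow> 'a assn" where
  "conj_atoms [] = Top"
| "conj_atoms [Q] = Atom Q"
| "conj_atoms (Q # Qs) = Conj (Atom Q) (conj_atoms Qs)"

end

theory Submission
  imports Defs
begin

text \<open>Both sides are characterised pointwise. A set satisfies
  \<open>Q\<^sub>1 \<oplus> \<dots> \<oplus> Q\<^sub>n\<close> iff it is nonempty, each of its states satisfies some \<open>Q\<^sub>i\<close>,
  and each \<open>Q\<^sub>i\<close> is satisfied by some of its states. Negating this gives the three
  alternatives: \<open>S\<close> is empty, some \<open>Q\<^sub>i\<close> fails everywhere on \<open>S\<close> (that is,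
  \<open>S \<Turnstile> \<overline>Q\<^sub>i\<close>), or some state of \<open>S\<close> satisfies no \<open>Q\<^sub>i\<close>, which is exactly
  \<open>S \<Turnstile> (\<overline>Q\<^sub>1 \<and> \<dots> \<and> \<overline>Q\<^sub>n) \<oplus> \<top>\<close>.\<close>

lemma models_oplus_atoms_iff:
  assumes "Qs \<noteq> []"
  shows "models sat S (oplus_atoms Qs) \<longleftrightarrow>
    S \<noteq> {} \<and> (\<forall>\<sigma>\<in>S. \<exists>Q\<in>set Qs. sat \<sigma> Q) \<and> (\<forall>Q\<in>set Qs. \<exists>\<sigma>\<in>S. sat \<sigma> Q)"
  using assms
proof (induction Qs arbitrary: S rule: oplus_atoms.induct)
  case 1
  then show ?case by simp
next
  case (2 Q)
  then show ?case by auto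
next
  case (3 Q Q' Qs)
  let ?Qs = "Q' # Qs"
  have IH: "models sat T (oplus_atoms ?Qs) \<longleftrightarrow>
      T \<noteq> {} \<and> (\<forall>\<sigma>\<in>T. \<exists>Q\<in>set ?Qs. sat \<sigma> Q) \<and> (\<forall>Q\<in>set ?Qs. \<exists>\<sigma>\<in>T. sat \<sigma> Q)" for T
    using "3.IH" by simp
  show ?case
  proof
    assume "models sat S (oplus_atoms (Q # ?Qs))"
    then obtain S1 S2 where "S = S1 \<union> S2" "models sat S1 (Atom Q)" "models sat S2 (oplus_atoms ?Qs)"
      by auto
    then show "S \<noteq> {} \<and> (\<forall>\<sigma>\<in>S. \<exists>Q\<in>set (Q # ?Qs). sat \<sigma> Q) \<and> (\<forall>Q\<in>set (Q # ?Qs). \<exists>\<sigma>\<in>S. sat \<sigma> Q)"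
      unfolding IH by auto
  next
    assume covered: "S \<noteq> {} \<and> (\<forall>\<sigma>\<in>S. \<exists>Q\<in>set (Q # ?Qs). sat \<sigma> Q) \<and> (\<forall>Q\<in>set (Q # ?Qs). \<exists>\<sigma>\<in>S. sat \<sigma> Q)"
    define S1 where "S1 = {\<sigma>\<in>S. sat \<sigma> Q}"
    define S2 where "S2 = {\<sigma>\<in>S. \<exists>Q\<in>set ?Qs. sat \<sigma> Q}"
    have "S1 \<union> S2 = S" "models sat S1 (Atom Q)"
      using covered unfolding S1_def S2_def by auto
    moreover have "models sat S2 (oplus_atoms ?Qs)"
      using covered unfolding S2_def IH by (simp, blast)
    ultimately show "models sat S (oplus_atoms (Q # ?Qs))"
      by (simp only: oplus_atoms.simps models.simps) blast
  qed
qed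

lemma models_conj_atoms_iff:
  "Qs \<noteq> [] \<Longrightarrow> models sat S (conj_atoms Qs) \<longleftrightarrow> S \<noteq> {} \<and> (\<forall>\<sigma>\<in>S. \<forall>Q\<in>set Qs. sat \<sigma> Q)"
  by (induction Qs rule: conj_atoms.induct) auto

lemma models_Oplus_Top_iff: "models sat S (Oplus \<phi> Top) \<longleftrightarrow> (\<exists>T\<subseteq>S. models sat T \<phi>)"
  by auto

lemma models_Oplus_conj_atoms_Top_iff:
  assumes "Qs \<noteq> []"
  shows "models sat S (Oplus (conj_atoms Qs) Top) \<longleftrightarrow> (\<exists>\<sigma>\<in>S. \<forall>Q\<in>set Qs. sat \<sigma> Q)"
proof
  assume "models sat S (Oplus (conj_atoms Qs) Top)"
  then show "\<exists>\<sigma>\<in>S. \<forall>Q\<in>set Qs. sat \<sigma> Q"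
    unfolding models_Oplus_Top_iff models_conj_atoms_iff[OF assms] by blast
next
  assume "\<exists>\<sigma>\<in>S. \<forall>Q\<in>set Qs. sat \<sigma> Q"
  then obtain \<sigma> where "\<sigma> \<in> S" "\<forall>Q\<in>set Qs. sat \<sigma> Q"
    by blast
  then have "{\<sigma>} \<subseteq> S \<and> models sat {\<sigma>} (conj_atoms Qs)"
    by (simp add: models_conj_atoms_iff[OF assms])
  then show "models sat S (Oplus (conj_atoms Qs) Top)"
    unfolding models_Oplus_Top_iff by blast
qed

theorem lemma5p5:
  fixes sat :: "'s \<Rightarrow> 'a \<Rightarrow> bool"
    and neg :: "'a \<Rightarrow> 'a"
    and S :: "'s set"
    and Qs :: "'a list"
  assumes neg: "\<And>\<sigma> Q. sat \<sigma> (neg Q) \<longleftrightarrow> \<not> sat \<sigma> Q"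
    and n: "length Qs \<ge> 1"
  shows "(\<not> models sat S (oplus_atoms Qs)) \<longleftrightarrow>
           ((\<exists>i < length Qs. models sat S (Atom (neg (Qs ! i))))
            \<or> models sat S (Oplus (conj_atoms (map neg Qs)) Top)
            \<or> models sat S TopPlus)"
proof -
  have Qs: "Qs \<noteq> []"
    using n by auto
  have "(\<exists>i < length Qs. models sat S (Atom (neg (Qs ! i)))) \<longleftrightarrow>
      (\<exists>Q\<in>set Qs. models sat S (Atom (neg Q)))"
    by (metis in_set_conv_nth)
  also have "\<dots> \<longleftrightarrow> S \<noteq> {} \<and> (\<exists>Q\<in>set Qs. \<forall>\<sigma>\<in>S. \<not> sat \<sigma> Q)"
    by (auto simp: neg)
  finally have some_neg_atom: "(\<exists>i < length Qs. models sat S (Atom (neg (Qs ! i)))) \<longleftrightarrow>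
      S \<noteq> {} \<and> (\<exists>Q\<in>set Qs. \<forall>\<sigma>\<in>S. \<not> sat \<sigma> Q)" .
  have some_state_refutes_all: "models sat S (Oplus (conj_atoms (map neg Qs)) Top) \<longleftrightarrow>
      (\<exists>\<sigma>\<in>S. \<forall>Q\<in>set Qs. \<not> sat \<sigma> Q)"
    using Qs by (subst models_Oplus_conj_atoms_Top_iff) (simp_all add: neg)
  show ?thesis
    unfolding some_neg_atom some_state_refutes_all models_oplus_atoms_iff[OF Qs] models.simps(3)
    by blast
qed

end
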